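(* Let $R = \mathbb{Z} \times \mathbb{Z}$ with coordinatewise addition and multiplication $(a,b)\cdot(c,d) = (ac, ad+bc)$, and consider the template $(\mathbb{Z}^+ \times \mathbb{N}, \mathbb{N}^2, \mathbb{N}^2)$ in $R$. Let $n \ge 2$ and let $(\alpha_1, \dots, \alpha_n)$ be a list of elements $\alpha_i = (a_i, b_i) \in \mathbb{Z}^+ \times \mathbb{N}$ with $\gcd(a_1, \dots, a_n) = 1$. Then $\mathrm{Frob}(\alpha_1, \dots, \alpha_n)$ is nonempty if and only if $b_i = 0$ for at least one $i$.
   Context: $\mathbb{N}$ denotes the nonnegative integers, $\mathbb{Z}^+ = \mathbb{N}\setminus\{0\}$. For the template above, $MN(\alpha_1, \dots, \alpha_n) = \{\sum_{i=1}^n \alpha_i \lambda_i : \lambda_i \in \mathbb{N}^2\}$ (product in $R$), and $\mathrm{Frob}(\alpha_1, \dots, \alpha_n) = \{w \in R : w + \mathbb{N}^2 \subseteq MN(\alpha_1, \dots, \alpha_n)\}$, where $w + \mathbb{N}^2 = \{w+u : u \in \mathbb{N}^2\}$. *)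

theory Defs
  imports Main
begin

definition radd :: "int \<times> int \<Rightarrow> int \<times> int \<Rightarrow> int \<times> int" where
  "radd x y = (fst x + fst y, snd x + snd y)"

definition rmul :: "int \<times> int \<Rightarrow> int \<times> int \<Rightarrow> int \<times> int" where
  "rmul x y = (fst x * fst y, fst x * snd y + snd x * fst y)"

definition N2 :: "(int \<times> int) set" where
  "N2 = {p. fst p \<ge> 0 \<and> snd p \<ge> 0}"

definition rlincomb :: "(int \<times> int) list \<Rightarrow> (nat \<Rightarrow> int \<times> int) \<Rightarrow> int \<times> int" where
  "rlincomb as lam =
     ((\<Sum>i<length as. fst (rmul (as ! i) (lam i))),
      (\<Sum>i<length as. snd (rmul (as ! i) (lam i))))"

definition MN :: "(int \<times> int) list \<Rightarrow> (int \<times> int) set" where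
  "MN as = {rlincomb as lam | lam. \<forall>i<length as. lam i \<in> N2}"

definition Frob :: "(int \<times> int) list \<Rightarrow> (int \<times> int) set" where
  "Frob as = {w. \<forall>u\<in>N2. radd w u \<in> MN as}"

end

theory Submission
  imports Defs
begin

text \<open>Write \<open>\<alpha>\<^sub>i = (a\<^sub>i, b\<^sub>i)\<close> and \<open>\<lambda>\<^sub>i = (x\<^sub>i, y\<^sub>i)\<close>, so that
  \<open>\<Sum> \<alpha>\<^sub>i \<lambda>\<^sub>i = (\<Sum> a\<^sub>i x\<^sub>i, \<Sum> a\<^sub>i y\<^sub>i + b\<^sub>i x\<^sub>i)\<close>.
  If every \<open>b\<^sub>i \<ge> 1\<close>, the second coordinate dominates \<open>\<Sum> x\<^sub>i\<close> and hence bounds the first one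
  by a constant multiple; so no translate \<open>w + \<nat>\<^sup>2\<close>, which contains points with fixed second and
  arbitrarily large first coordinate, fits into \<open>MN\<close>.
  Conversely, if \<open>b\<^sub>k = 0\<close>, every large integer \<open>Z\<close> is \<open>\<Sum> a\<^sub>i x\<^sub>i\<close> with \<open>x\<^sub>i \<ge> 0\<close> and all \<open>x\<^sub>i\<close>
  with \<open>i \<noteq> k\<close> below \<open>a\<^sub>k\<close>; then \<open>\<Sum> b\<^sub>i x\<^sub>i\<close> stays bounded, and the \<open>y\<^sub>i\<close> can be chosen afterwards
  to produce any large second coordinate.\<close>

lemma bezout_sum_int:
  fixes a :: "nat \<Rightarrow> int"
  shows "\<exists>c. (\<Sum>i<n. c i * a i) = Gcd (a ` {..<n})"
proof (induction n)
  case 0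
  then show ?case by simp
next
  case (Suc n)
  then obtain c where c: "(\<Sum>i<n. c i * a i) = Gcd (a ` {..<n})" by blast
  obtain u v where uv: "u * Gcd (a ` {..<n}) + v * a n = gcd (Gcd (a ` {..<n})) (a n)"
    using bezout_int by blast
  define c' where "c' i = (if i = n then v else u * c i)" for i
  have "(\<Sum>i<Suc n. c' i * a i) = u * Gcd (a ` {..<n}) + v * a n"
    by (simp add: c'_def c[symmetric] sum_distrib_left mult.assoc)
  also have "\<dots> = Gcd (a ` {..<Suc n})"
    using uv by (simp add: lessThan_Suc gcd.commute)
  finally show ?case by blast
qed

lemma nonneg_representation_bounded_except_one:
  fixes a :: "nat \<Rightarrow> int" and Z :: int
  assumes "k < n" and "a k > 0" and "\<forall>i<n. a i \<ge> 0"
    and "Gcd (a ` {..<n}) = 1"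
    and "Z \<ge> a k * (\<Sum>i<n. a i)"
  obtains x where "\<forall>i<n. x i \<ge> 0" and "\<forall>i<n. i \<noteq> k \<longrightarrow> x i < a k"
    and "(\<Sum>i<n. a i * x i) = Z"
proof -
  obtain c where c: "(\<Sum>i<n. c i * a i) = 1"
    using bezout_sum_int[of a n] assms(4) by auto
  define S where "S = {..<n} - {k}"
  have split_k: "(\<Sum>i<n. f i) = f k + (\<Sum>i\<in>S. f i)" for f :: "nat \<Rightarrow> int"
    using assms(1) by (simp add: S_def sum.remove)
  define r where "r i = (Z * c i) mod a k" for i
  have r_bounds: "0 \<le> r i" "r i < a k" for i
    using assms(2) by (auto simp: r_def)
  \<comment> \<open>\<open>Z = \<Sum> a\<^sub>i (Z c\<^sub>i)\<close> and \<open>r\<^sub>i \<equiv> Z c\<^sub>i (mod a\<^sub>k)\<close>\<close>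
  have "Z - (\<Sum>i\<in>S. a i * r i) = a k * (Z * c k) + (\<Sum>i\<in>S. a i * (Z * c i - r i))"
  proof -
    have "Z = (\<Sum>i<n. a i * (Z * c i))"
      using c by (simp add: sum_distrib_left[symmetric] mult.commute mult.left_commute)
    then show ?thesis
      by (simp add: split_k right_diff_distrib sum_subtractf)
  qed
  moreover have "a k dvd (\<Sum>i\<in>S. a i * (Z * c i - r i))"
    by (intro dvd_sum dvd_mult) (simp add: r_def)
  ultimately have "a k dvd Z - (\<Sum>i\<in>S. a i * r i)"
    by simp
  then obtain q where q: "Z - (\<Sum>i\<in>S. a i * r i) = a k * q"
    by (elim dvdE)
  have "(\<Sum>i\<in>S. a i * r i) \<le> (\<Sum>i\<in>S. a i * a k)"
    using r_bounds assms(3) by (intro sum_mono mult_left_mono) (auto simp: S_def less_imp_le)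
  also have "\<dots> \<le> (\<Sum>i<n. a i * a k)"
    using assms(2,3) by (intro sum_mono2) (auto simp: S_def)
  also have "\<dots> \<le> Z"
    using assms(5) by (simp add: sum_distrib_left mult.commute)
  finally have "a k * q \<ge> 0"
    using q by linarith
  then have "q \<ge> 0"
    using assms(2) by (simp add: zero_le_mult_iff)
  define x where "x i = (if i = k then q else r i)" for i
  have "(\<Sum>i<n. a i * x i) = Z"
    using q by (simp add: split_k x_def S_def)
  moreover have "\<forall>i<n. x i \<ge> 0" "\<forall>i<n. i \<noteq> k \<longrightarrow> x i < a k"
    using \<open>q \<ge> 0\<close> r_bounds by (auto simp: x_def)
  ultimately show thesis
    using that by blast
qed

lemma rlincomb_eq_sums:
  "rlincomb as lam =
     ((\<Sum>i<length as. fst (as ! i) * fst (lam i)),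
      (\<Sum>i<length as. fst (as ! i) * snd (lam i) + snd (as ! i) * fst (lam i)))"
  by (simp add: rlincomb_def rmul_def)

lemma MN_fst_le_sum_times_snd:
  assumes "\<forall>\<alpha>\<in>set as. fst \<alpha> \<ge> 0 \<and> snd \<alpha> \<ge> 1" and "p \<in> MN as"
  shows "fst p \<le> (\<Sum>i<length as. fst (as ! i)) * snd p"
proof -
  define n where "n = length as"
  define a where "a i = fst (as ! i)" for i
  define b where "b i = snd (as ! i)" for i
  have ab: "a i \<ge> 0" "b i \<ge> 1" if "i < n" for i
    using assms(1) that by (auto simp: a_def b_def n_def)
  obtain lam where lam: "\<forall>i<n. lam i \<in> N2" and p: "p = rlincomb as lam"
    using assms(2) by (auto simp: MN_def n_def)
  have lam_nonneg: "fst (lam i) \<ge> 0" "snd (lam i) \<ge> 0" if "i < n" for i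
    using lam that by (auto simp: N2_def)
  have "fst p = (\<Sum>i<n. a i * fst (lam i))"
    by (simp add: p rlincomb_eq_sums a_def n_def)
  also have "\<dots> \<le> (\<Sum>i<n. (\<Sum>j<n. a j) * fst (lam i))"
    using ab lam_nonneg by (intro sum_mono mult_right_mono member_le_sum) auto
  also have "\<dots> = (\<Sum>j<n. a j) * (\<Sum>i<n. fst (lam i))"
    by (simp add: sum_distrib_left)
  also have "\<dots> \<le> (\<Sum>j<n. a j) * (\<Sum>i<n. a i * snd (lam i) + b i * fst (lam i))"
  proof (intro mult_left_mono sum_mono sum_nonneg)
    fix i assume "i \<in> {..<n}"
    then have "i < n" by simp
    have "1 * fst (lam i) \<le> b i * fst (lam i)"
      using ab lam_nonneg \<open>i < n\<close> by (intro mult_right_mono) auto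
    moreover have "a i * snd (lam i) \<ge> 0"
      using ab lam_nonneg \<open>i < n\<close> by simp
    ultimately show "fst (lam i) \<le> a i * snd (lam i) + b i * fst (lam i)"
      by simp
  qed (use ab in auto)
  also have "\<dots> = (\<Sum>i<length as. fst (as ! i)) * snd p"
    by (simp add: p rlincomb_eq_sums a_def b_def n_def)
  finally show ?thesis .
qed

lemma Frob_empty_if_snd_pos:
  assumes "\<forall>\<alpha>\<in>set as. fst \<alpha> \<ge> 0 \<and> snd \<alpha> \<ge> 1"
  shows "Frob as = {}"
proof (rule ccontr)
  assume "Frob as \<noteq> {}"
  then obtain w where w: "w \<in> Frob as" by blast
  define A where "A = (\<Sum>i<length as. fst (as ! i))"
  have "A \<ge> 0"
    using assms by (auto simp: A_def intro: sum_nonneg)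
  define t where "t = A * \<bar>snd w\<bar> + \<bar>fst w\<bar> + 1"
  have "(t, 0) \<in> N2"
    using \<open>A \<ge> 0\<close> by (simp add: t_def N2_def)
  then have "radd w (t, 0) \<in> MN as"
    using w by (simp add: Frob_def)
  then have "fst w + t \<le> A * snd w"
    using MN_fst_le_sum_times_snd[OF assms] by (fastforce simp: radd_def A_def)
  moreover have "A * snd w \<le> A * \<bar>snd w\<bar>"
    using \<open>A \<ge> 0\<close> by (simp add: mult_left_mono)
  ultimately show False
    by (simp add: t_def)
qed

lemma Frob_nonempty_if_snd_zero:
  assumes nonneg: "\<forall>\<alpha>\<in>set as. fst \<alpha> \<ge> 0 \<and> snd \<alpha> \<ge> 0"
    and coprime: "Gcd (fst ` set as) = 1"
    and \<beta>: "\<beta> \<in> set as" "fst \<beta> > 0" "snd \<beta> = 0"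
  shows "Frob as \<noteq> {}"
proof -
  define n where "n = length as"
  define a where "a i = fst (as ! i)" for i
  define b where "b i = snd (as ! i)" for i
  have ab: "a i \<ge> 0" "b i \<ge> 0" if "i < n" for i
    using nonneg that by (auto simp: a_def b_def n_def)
  obtain k where k: "k < n" "as ! k = \<beta>"
    using \<beta>(1) by (auto simp: in_set_conv_nth n_def)
  have "a k > 0" "b k = 0"
    using k \<beta> by (auto simp: a_def b_def)
  have "a ` {..<n} = fst ` (nth as ` {0..<n})"
    by (simp add: a_def image_image lessThan_atLeast0)
  also have "\<dots> = fst ` set as"
    using nth_image[of n as] by (simp add: n_def)
  finally have gcd_a: "Gcd (a ` {..<n}) = 1"
    using coprime by simp
  have a_nonneg: "\<forall>i<n. a i \<ge> 0"
    using ab(1) by blast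
  note represent =
    nonneg_representation_bounded_except_one[OF \<open>k < n\<close> \<open>a k > 0\<close> a_nonneg gcd_a]
  define X where "X = a k * (\<Sum>i<n. a i)"
  define B where "B = (\<Sum>i<n. b i * a k)"
  have "radd (X, X + B) u \<in> MN as" if "u \<in> N2" for u
  proof -
    have u: "fst u \<ge> 0" "snd u \<ge> 0"
      using that by (auto simp: N2_def)
    have "X + fst u \<ge> a k * (\<Sum>i<n. a i)"
      using u by (simp add: X_def)
    then obtain x where x: "\<forall>i<n. x i \<ge> 0" "\<forall>i<n. i \<noteq> k \<longrightarrow> x i < a k"
      "(\<Sum>i<n. a i * x i) = X + fst u"
      by (rule represent)
    \<comment> \<open>Since \<open>b\<^sub>k = 0\<close>, only the bounded \<open>x\<^sub>i\<close> contribute to the second coordinate.\<close>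
    have "(\<Sum>i<n. b i * x i) \<le> B"
      unfolding B_def
    proof (rule sum_mono)
      fix i assume "i \<in> {..<n}"
      then have "i < n" by simp
      show "b i * x i \<le> b i * a k"
      proof (cases "i = k")
        case True
        then show ?thesis using \<open>b k = 0\<close> by simp
      next
        case False
        then have "x i \<le> a k" using x(2) \<open>i < n\<close> by (blast intro: less_imp_le)
        then show ?thesis using ab(2)[OF \<open>i < n\<close>] by (rule mult_left_mono)
      qed
    qed
    then have "X + B + snd u - (\<Sum>i<n. b i * x i) \<ge> a k * (\<Sum>i<n. a i)"
      using u by (simp add: X_def)
    then obtain y where y: "\<forall>i<n. y i \<ge> 0"
      "(\<Sum>i<n. a i * y i) = X + B + snd u - (\<Sum>i<n. b i * x i)"
      using represent by blast
    define lam where "lam i = (x i, y i)" for i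
    have lam_sum: "rlincomb as lam = radd (X, X + B) u"
      using x(3) y(2)
      by (simp add: rlincomb_eq_sums radd_def lam_def a_def[symmetric] b_def[symmetric]
          n_def[symmetric] sum.distrib)
    have lam_N2: "\<forall>i<length as. lam i \<in> N2"
      using x(1) y(1) by (simp add: N2_def lam_def n_def)
    show ?thesis
      unfolding MN_def by (intro CollectI exI[of _ lam] conjI) (simp_all add: lam_sum lam_N2)
  qed
  then have "(X, X + B) \<in> Frob as"
    by (simp add: Frob_def)
  then show ?thesis
    by blast
qed

theorem corollary4p1:
  fixes as :: "(int \<times> int) list"
  assumes "length as \<ge> 2"
    and "\<forall>\<alpha>\<in>set as. fst \<alpha> > 0 \<and> snd \<alpha> \<ge> 0"
    and "Gcd (fst ` set as) = 1"
  shows "Frob as \<noteq> {} \<longleftrightarrow> (\<exists>\<alpha>\<in>set as. snd \<alpha> = 0)"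
proof
  assume "Frob as \<noteq> {}"
  show "\<exists>\<alpha>\<in>set as. snd \<alpha> = 0"
  proof (rule ccontr)
    assume "\<not> (\<exists>\<alpha>\<in>set as. snd \<alpha> = 0)"
    then have "\<forall>\<alpha>\<in>set as. fst \<alpha> \<ge> 0 \<and> snd \<alpha> \<ge> 1"
      using assms(2) by (fastforce simp: int_one_le_iff_zero_less)
    then show False
      using Frob_empty_if_snd_pos \<open>Frob as \<noteq> {}\<close> by blast
  qed
next
  assume "\<exists>\<alpha>\<in>set as. snd \<alpha> = 0"
  then obtain \<beta> where "\<beta> \<in> set as" "snd \<beta> = 0"
    by blast
  moreover have "\<forall>\<alpha>\<in>set as. fst \<alpha> \<ge> 0 \<and> snd \<alpha> \<ge> 0"
    using assms(2) by (auto intro: less_imp_le)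
  ultimately show "Frob as \<noteq> {}"
    using Frob_nonempty_if_snd_zero assms(2,3) by blast
qed

end
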